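(* Let $k$ be a field, $(C,\Delta)$ a coassociative coalgebra over $k$, and $(L,\phi,\mu)$ a Poisson algebra over $k$: $\phi(a,b)=[a,b]$ is a Lie bracket, $\mu(a,b)=ab$ is an associative commutative product, and $[a,bc]=c[a,b]+b[a,c]$. Let $\Phi,M:Hom(C,L)\otimes Hom(C,L)\to Hom(C,L)$ be the induced maps, $\Phi(f\otimes g)(c)=\sum[f(c_{(1)}),g(c_{(2)})]$, $M(f\otimes g)(c)=\sum f(c_{(1)})g(c_{(2)})$. Then $(Hom(C,L),\Phi,M)$ is a TD Poisson algebra, namely: (i) $\Phi\circ\tau=-\Phi^\tau$ and $\sum\big([g_1(c_{(1)}),[g_2(c_{(2)}),g_3(c_{(3)})]]+[g_2(c_{(2)}),[g_3(c_{(3)}),g_1(c_{(1)})]]+[g_3(c_{(3)}),[g_1(c_{(1)}),g_2(c_{(2)})]]\big)=0$ for all $g_i\in Hom(C,L)$, $c\in C$; (ii) $M\circ\tau=M^{\tau}$, i.e. $M(g\otimes f)(c)=\sum f(c_{(2)})g(c_{(1)})$; (iii) $\Phi\circ(1\otimes M)=(M\circ(1\otimes\Phi))^{\rho}\circ\rho+(M\circ(1\otimes\Phi))^{\tau_{12}}\circ\tau_{12}$, where $\rho\in S_3$ acts by $x_1\otimes x_2\otimes x_3\mapsto x_3\otimes x_1\otimes x_2$ and $\tau_{12}$ by $x_1\otimes x_2\otimes x_3\mapsto x_2\otimes x_1\otimes x_3$; explicitly, for all $f,g,h\in Hom(C,L)$, $c\in C$, $$\sum[f(c_{(1)}),g(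c_{(2)})h(c_{(3)})]=\sum\Big(h(c_{(3)})[f(c_{(1)}),g(c_{(2)})]+g(c_{(2)})[f(c_{(1)}),h(c_{(3)})]\Big).$$
   Context: Sweedler notation: $\Delta(c)=\sum c_{(1)}\otimes c_{(2)}$, $((\Delta\otimes1)\circ\Delta)(c)=\sum c_{(1)}\otimes c_{(2)}\otimes c_{(3)}$. $S_n$ acts on $n$-fold tensor products by $\sigma(x_1\otimes\dots\otimes x_n)=x_{\sigma(1)}\otimes\dots\otimes x_{\sigma(n)}$; $\tau$ is the transposition in $S_2$. For a map $\Theta$ induced by $\theta:L^{\otimes n}\to L$ (i.e. $\Theta(f_1\otimes\dots\otimes f_n)=\theta\circ(f_1\otimes\dots\otimes f_n)\circ\Delta^{(n-1)}$, $\Delta^{(n-1)}$ the iterated coproduct) and $\sigma\in S_n$, $\Theta^\sigma(f_1\otimes\dots\otimes f_n)=\theta\circ(f_1\otimes\dots\otimes f_n)\circ\sigma\circ\Delta^{(n-1)}$; $M\circ(1\otimes\Phi)$ is the map induced by $\mu\circ(1\otimes\phi)$. *)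

theory Defs
  imports Complex_Main
begin

definition bilin ::
  "('k::field \<Rightarrow> 'a::ab_group_add \<Rightarrow> 'a) \<Rightarrow> ('k \<Rightarrow> 'b::ab_group_add \<Rightarrow> 'b)
   \<Rightarrow> ('k \<Rightarrow> 'd::ab_group_add \<Rightarrow> 'd) \<Rightarrow> ('a \<Rightarrow> 'b \<Rightarrow> 'd) \<Rightarrow> bool" where
  "bilin sA sB sD B \<longleftrightarrow>
     (\<forall>y. Vector_Spaces.linear sA sD (\<lambda>x. B x y)) \<and> (\<forall>x. Vector_Spaces.linear sB sD (B x))"

definition trilin ::
  "('k::field \<Rightarrow> 'a::ab_group_add \<Rightarrow> 'a) \<Rightarrow> ('k \<Rightarrow> 'd::ab_group_add \<Rightarrow> 'd)
   \<Rightarrow> ('a \<Rightarrow> 'a \<Rightarrow> 'a \<Rightarrow> 'd) \<Rightarrow> bool" where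
  "trilin sA sD T \<longleftrightarrow>
     (\<forall>y z. Vector_Spaces.linear sA sD (\<lambda>x. T x y z)) \<and>
     (\<forall>x z. Vector_Spaces.linear sA sD (\<lambda>y. T x y z)) \<and>
     (\<forall>x y. Vector_Spaces.linear sA sD (\<lambda>z. T x y z))"

text \<open>The comultiplication is given in Sweedler form: \<open>\<Delta> c\<close> is a finite list of pairs
  \<open>(c\<^sub>1, c\<^sub>2)\<close> with \<open>\<Delta>(c) = \<Sum> c\<^sub>1 \<otimes> c\<^sub>2\<close>.  Tensors in \<open>C\<otimes>C\<close> (resp. \<open>C\<otimes>C\<otimes>C\<close>) are
  compared through their pairings with all scalar-valued bilinear (trilinear) forms,
  which separate points of tensor products of vector spaces over a field.\<close>

definition sweedler3 :: "('c \<Rightarrow> ('c \<times> 'c) list) \<Rightarrow> 'c \<Rightarrow> ('c \<times> 'c \<times> 'c) list" where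
  "sweedler3 \<Delta> c = concat (map (\<lambda>(a, b). map (\<lambda>(x, y). (x, y, b)) (\<Delta> a)) (\<Delta> c))"
  \<comment> \<open>\<open>((\<Delta>\<otimes>1)\<circ>\<Delta>)(c) = \<Sum> c\<^sub>(\<^sub>1\<^sub>) \<otimes> c\<^sub>(\<^sub>2\<^sub>) \<otimes> c\<^sub>(\<^sub>3\<^sub>)\<close>\<close>

definition sweedler3' :: "('c \<Rightarrow> ('c \<times> 'c) list) \<Rightarrow> 'c \<Rightarrow> ('c \<times> 'c \<times> 'c) list" where
  "sweedler3' \<Delta> c = concat (map (\<lambda>(a, b). map (\<lambda>(x, y). (a, x, y)) (\<Delta> b)) (\<Delta> c))"

definition coassoc_coalgebra ::
  "('k::field \<Rightarrow> 'c::ab_group_add \<Rightarrow> 'c) \<Rightarrow> ('c \<Rightarrow> ('c \<times> 'c) list) \<Rightarrow> bool" where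
  "coassoc_coalgebra sC \<Delta> \<longleftrightarrow>
     vector_space sC \<and>
     \<comment> \<open>\<open>\<Delta> : C \<rightarrow> C\<otimes>C\<close> is linear\<close>
     (\<forall>B. bilin sC sC ((*) :: 'k \<Rightarrow> 'k \<Rightarrow> 'k) B \<longrightarrow>
          Vector_Spaces.linear sC ((*) :: 'k \<Rightarrow> 'k \<Rightarrow> 'k) (\<lambda>c. \<Sum>(x, y)\<leftarrow>\<Delta> c. B x y)) \<and>
     \<comment> \<open>coassociativity \<open>(\<Delta>\<otimes>1)\<circ>\<Delta> = (1\<otimes>\<Delta>)\<circ>\<Delta>\<close>\<close>
     (\<forall>T c. trilin sC ((*) :: 'k \<Rightarrow> 'k \<Rightarrow> 'k) T \<longrightarrow>
          (\<Sum>(x, y, z)\<leftarrow>sweedler3 \<Delta> c. T x y z) = (\<Sum>(x, y, z)\<leftarrow>sweedler3' \<Delta> c. T x y z))"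

definition poisson_algebra ::
  "('k::field \<Rightarrow> 'l::ab_group_add \<Rightarrow> 'l) \<Rightarrow> ('l \<Rightarrow> 'l \<Rightarrow> 'l) \<Rightarrow> ('l \<Rightarrow> 'l \<Rightarrow> 'l) \<Rightarrow> bool" where
  "poisson_algebra sL \<phi> \<mu> \<longleftrightarrow>
     vector_space sL \<and> bilin sL sL sL \<phi> \<and> bilin sL sL sL \<mu> \<and>
     (\<forall>a. \<phi> a a = 0) \<and>
     (\<forall>a b c. \<phi> a (\<phi> b c) + \<phi> b (\<phi> c a) + \<phi> c (\<phi> a b) = 0) \<and>
     (\<forall>a b c. \<mu> (\<mu> a b) c = \<mu> a (\<mu> b c)) \<and>
     (\<forall>a b. \<mu> a b = \<mu> b a) \<and>
     (\<forall>a b c. \<phi> a (\<mu> b c) = \<mu> c (\<phi> a b) + \<mu> b (\<phi> a c))"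

text \<open>Induced operation \<open>\<Theta>(f\<otimes>g) = \<theta>\<circ>(f\<otimes>g)\<circ>\<Delta>\<close> and its twist \<open>\<Theta>\<^sup>\<tau>(f\<otimes>g) = \<theta>\<circ>(f\<otimes>g)\<circ>\<tau>\<circ>\<Delta>\<close>.\<close>

definition induced :: "('c \<Rightarrow> ('c \<times> 'c) list) \<Rightarrow> ('l \<Rightarrow> 'l \<Rightarrow> 'l::monoid_add)
    \<Rightarrow> ('c \<Rightarrow> 'l) \<Rightarrow> ('c \<Rightarrow> 'l) \<Rightarrow> 'c \<Rightarrow> 'l" where
  "induced \<Delta> \<theta> f g c = (\<Sum>(x, y)\<leftarrow>\<Delta> c. \<theta> (f x) (g y))"

definition induced_tau :: "('c \<Rightarrow> ('c \<times> 'c) list) \<Rightarrow> ('l \<Rightarrow> 'l \<Rightarrow> 'l::monoid_add)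
    \<Rightarrow> ('c \<Rightarrow> 'l) \<Rightarrow> ('c \<Rightarrow> 'l) \<Rightarrow> 'c \<Rightarrow> 'l" where
  "induced_tau \<Delta> \<theta> f g c = (\<Sum>(x, y)\<leftarrow>\<Delta> c. \<theta> (f y) (g x))"

end

theory Submission
  imports Defs
begin

text \<open>Each of the four identities already holds summand by summand in the Sweedler sums:
  the summands are the corresponding identities of the Poisson algebra \<open>L\<close> evaluated at
  \<open>f(c\<^sub>(\<^sub>1\<^sub>)), g(c\<^sub>(\<^sub>2\<^sub>)), \<dots>\<close>.\<close>

lemma bilin_add_left: "bilin sA sB sD B \<Longrightarrow> B (x + x') y = B x y + B x' y"
  unfolding bilin_def by (metis module_hom.add module_hom_iff_linear)

lemma bilin_add_right: "bilin sA sB sD B \<Longrightarrow> B x (y + y') = B x y + B x y'"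
  unfolding bilin_def by (metis module_hom.add module_hom_iff_linear)

lemma alternating_bilin_antisym:
  assumes "bilin s s s B" and "\<And>a. B a a = 0"
  shows "B b a = - B a b"
proof -
  have "0 = B (a + b) (a + b)" using assms(2) by simp
  also have "\<dots> = B a a + B a b + (B b a + B b b)"
    using assms(1) by (simp add: bilin_add_left bilin_add_right add.assoc)
  finally show ?thesis using assms(2) by (simp add: eq_neg_iff_add_eq_0 add.commute)
qed

lemma induced_eq_induced_tau_flip: "induced \<Delta> \<theta> g f = induced_tau \<Delta> (\<lambda>a b. \<theta> b a) f g"
  unfolding induced_def induced_tau_def ..

lemma induced_tau_uminus:
  fixes \<theta> :: "'l::ab_group_add \<Rightarrow> 'l \<Rightarrow> 'l"
  shows "induced_tau \<Delta> (\<lambda>a b. - \<theta> a b) f g = (\<lambda>c. - induced_tau \<Delta> \<theta> f g c)"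
  unfolding induced_tau_def by (simp add: uminus_sum_list_map case_prod_unfold comp_def)

theorem proposition4:
  fixes sC :: "'k::field \<Rightarrow> 'c::ab_group_add \<Rightarrow> 'c"
    and sL :: "'k \<Rightarrow> 'l::ab_group_add \<Rightarrow> 'l"
    and \<Delta> :: "'c \<Rightarrow> ('c \<times> 'c) list"
    and \<phi> \<mu> :: "'l \<Rightarrow> 'l \<Rightarrow> 'l"
  assumes C: "coassoc_coalgebra sC \<Delta>"
    and L: "poisson_algebra sL \<phi> \<mu>"
  shows
    "(\<forall>f g. Vector_Spaces.linear sC sL f \<longrightarrow> Vector_Spaces.linear sC sL g \<longrightarrow>
        induced \<Delta> \<phi> g f = (\<lambda>c. - induced_tau \<Delta> \<phi> f g c)) \<and>
     (\<forall>g1 g2 g3 c. Vector_Spaces.linear sC sL g1 \<longrightarrow> Vector_Spaces.linear sC sL g2 \<longrightarrow>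
        Vector_Spaces.linear sC sL g3 \<longrightarrow>
        (\<Sum>(x, y, z)\<leftarrow>sweedler3 \<Delta> c.
            \<phi> (g1 x) (\<phi> (g2 y) (g3 z)) + \<phi> (g2 y) (\<phi> (g3 z) (g1 x))
          + \<phi> (g3 z) (\<phi> (g1 x) (g2 y))) = 0) \<and>
     (\<forall>f g. Vector_Spaces.linear sC sL f \<longrightarrow> Vector_Spaces.linear sC sL g \<longrightarrow>
        induced \<Delta> \<mu> g f = induced_tau \<Delta> \<mu> f g) \<and>
     (\<forall>f g h c. Vector_Spaces.linear sC sL f \<longrightarrow> Vector_Spaces.linear sC sL g \<longrightarrow>
        Vector_Spaces.linear sC sL h \<longrightarrow>
        (\<Sum>(x, y, z)\<leftarrow>sweedler3 \<Delta> c. \<phi> (f x) (\<mu> (g y) (h z)))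
      = (\<Sum>(x, y, z)\<leftarrow>sweedler3 \<Delta> c. \<mu> (h z) (\<phi> (f x) (g y)) + \<mu> (g y) (\<phi> (f x) (h z))))"
proof -
  from L have bracket_bilin: "bilin sL sL sL \<phi>"
    and bracket_alternating: "\<And>a. \<phi> a a = 0"
    and jacobi: "\<And>a b c. \<phi> a (\<phi> b c) + \<phi> b (\<phi> c a) + \<phi> c (\<phi> a b) = 0"
    and product_comm: "\<And>a b. \<mu> a b = \<mu> b a"
    and leibniz: "\<And>a b c. \<phi> a (\<mu> b c) = \<mu> c (\<phi> a b) + \<mu> b (\<phi> a c)"
    by (auto simp: poisson_algebra_def)
  have bracket_flip: "(\<lambda>a b. \<phi> b a) = (\<lambda>a b. - \<phi> a b)"
    using alternating_bilin_antisym[OF bracket_bilin bracket_alternating] by blast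
  have product_flip: "(\<lambda>a b. \<mu> b a) = \<mu>"
    using product_comm by blast
  show ?thesis
    by (simp add: induced_eq_induced_tau_flip bracket_flip product_flip induced_tau_uminus
        jacobi leibniz case_prod_unfold)
qed

end
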